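(* Let $P\in\mathcal{M}$ be the data-generating distribution, let $\boldsymbol{\psi}=(\psi_k)_{k\in\mathbb{K}}$ be a regularization of a parameter $\psi:\mathcal{M}\to\Theta$, and let $d$ be a distance such that $\boldsymbol{\psi}$ is continuous at $P$ with respect to $d$ with family of moduli of continuity $(\delta_k)_{k\in\mathbb{K}}$. Suppose $d(P_n,P)=o_P(1)$. Then there exists a sequence $(k_n)_{n\in\mathbb{N}}$ in $\mathbb{K}$ such that $$B_{k_n}(P)=o(1)\quad\text{and}\quad \delta_{k_n}(d(P_n,P))=o_P(1),$$ and $$\|\psi_{k_n}(P_n)-\psi(P)\|_\Theta=o_P(1).$$
   Context: Let $\mathbb{Z}\subseteq\mathbb{R}^d$, let $\mathcal{P}(\mathbb{Z})$ be the set of Borel probability measures on $\mathbb{Z}$ and $ca(\mathbb{Z})$ the space of signed Borel measures of finite variation. Data $Z_1,Z_2,\dots$ are IID with law $P$; $\mathbf{P}$ is the induced product probability on $\mathbb{Z}^\infty$, and $o_P,O_P$ refer to $\mathbf{P}$. A model is a subset $\mathcal{M}\subseteq\mathcal{P}(\mathbb{Z})$; a parameter is a map $\psi:\mathcal{M}\to\Theta$ where $(\Theta,\|\cdot\|_\Theta)$ is a normed space. $\mathcal{D}$ denotes the set of discretely supported probability measures on $\mathbb{Z}$ and $P_n=n^{-1}\sum_{i=1}^n\delta_{Z_i}\in\mathcal{D}$ the empirical distribution. A tuning set is a subset $\mathbb{K}\subseteq\mathbb{R}_+$ unbounded from above. A regularization of $\psi$ is a family $\boldsymbol{\psi}=(\psi_k)_{k\in\mathbb{K}}$,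 $\mathbb{K}$ a tuning set, with $\psi_k:\mathbb{D}_\psi\subseteq ca(\mathbb{Z})\to\Theta$ for a set $\mathbb{D}_\psi\supseteq\mathcal{M}\cup\mathcal{D}$, such that for every $P\in\mathcal{M}$ the approximation error $B_k(P):=\|\psi_k(P)-\psi(P)\|_\Theta$ tends to $0$ as $k\to\infty$. A modulus of continuity is a continuous non-decreasing $f:\mathbb{R}_+\to\mathbb{R}_+$ with $f(t)=0$ iff $t=0$. The regularization is continuous at $P\in\mathbb{D}_\psi$ with respect to $d$ if there is a family of moduli of continuity $(\delta_k)$ with $\|\psi_k(P')-\psi_k(P)\|_\Theta\le\delta_k(d(P',P))$ for all $k\in\mathbb{K}$ and all $P'\in\mathbb{D}_\psi$. *)

theory Defs
  imports "HOL-Probability.Probability"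
begin

text \<open>Measures on a subset Z of a Euclidean space are represented as set functions
  \<open>'a set \<Rightarrow> real\<close>, defined on the Borel sets of Z (the trace sigma-algebra)
  and equal to 0 on all other sets.\<close>

definition borel_sets_on :: "'a::euclidean_space set \<Rightarrow> 'a set set" where
  "borel_sets_on Z = sets (restrict_space borel Z)"

definition ca :: "'a::euclidean_space set \<Rightarrow> ('a set \<Rightarrow> real) set" where
  "ca Z = {\<mu>. (\<forall>A. A \<notin> borel_sets_on Z \<longrightarrow> \<mu> A = 0)
            \<and> \<mu> {} = 0
            \<and> (\<forall>F::nat \<Rightarrow> 'a set. range F \<subseteq> borel_sets_on Z \<longrightarrow> disjoint_family F
                  \<longrightarrow> (\<lambda>i. \<mu> (F i)) sums \<mu> (\<Union>i. F i))
            \<and> (\<exists>C. \<forall>(I::nat set) F. finite I \<longrightarrow> F ` I \<subseteq> borel_sets_on Z \<longrightarrow> disjoint_family_on F I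
                  \<longrightarrow> (\<Sum>i\<in>I. \<bar>\<mu> (F i)\<bar>) \<le> C)}"

definition prob_measures :: "'a::euclidean_space set \<Rightarrow> ('a set \<Rightarrow> real) set" where
  "prob_measures Z = {\<mu> \<in> ca Z. (\<forall>A. \<mu> A \<ge> 0) \<and> \<mu> Z = 1}"

definition discrete_measures :: "'a::euclidean_space set \<Rightarrow> ('a set \<Rightarrow> real) set" where
  "discrete_measures Z = {\<mu> \<in> prob_measures Z. \<exists>S. countable S \<and> S \<subseteq> Z \<and> \<mu> (Z - S) = 0}"

definition empirical ::
  "'a::euclidean_space set \<Rightarrow> (nat \<Rightarrow> 'w \<Rightarrow> 'a) \<Rightarrow> nat \<Rightarrow> 'w \<Rightarrow> 'a set \<Rightarrow> real" where
  "empirical Z X n \<omega> A =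
     (if A \<in> borel_sets_on Z then (\<Sum>i<n. indicator A (X i \<omega>)) / real n else 0)"

text \<open>Outer probability (events need not be measurable).\<close>
definition outer_prob :: "'w measure \<Rightarrow> 'w set \<Rightarrow> real" where
  "outer_prob \<Omega> A = Inf {measure \<Omega> B | B. B \<in> sets \<Omega> \<and> A \<inter> space \<Omega> \<subseteq> B}"

definition o_P1 :: "'w measure \<Rightarrow> (nat \<Rightarrow> 'w \<Rightarrow> real) \<Rightarrow> bool" where
  "o_P1 \<Omega> Y \<longleftrightarrow> (\<forall>\<epsilon>>0. ((\<lambda>n. outer_prob \<Omega> {\<omega> \<in> space \<Omega>. \<epsilon> < \<bar>Y n \<omega>\<bar>}) \<longlongrightarrow> 0) sequentially)"

definition modulus_of_continuity :: "(real \<Rightarrow> real) \<Rightarrow> bool" where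
  "modulus_of_continuity f \<longleftrightarrow> continuous_on {0..} f \<and> mono_on {0..} f
      \<and> (\<forall>t\<ge>0. f t \<ge> 0) \<and> (\<forall>t\<ge>0. f t = 0 \<longleftrightarrow> t = 0)"

definition tuning_set :: "real set \<Rightarrow> bool" where
  "tuning_set K \<longleftrightarrow> K \<subseteq> {0..} \<and> (\<forall>b. \<exists>k\<in>K. k > b)"

definition regularization ::
  "'a::euclidean_space set \<Rightarrow> ('a set \<Rightarrow> real) set \<Rightarrow> (('a set \<Rightarrow> real) \<Rightarrow> 'b::real_normed_vector)
   \<Rightarrow> real set \<Rightarrow> ('a set \<Rightarrow> real) set \<Rightarrow> (real \<Rightarrow> ('a set \<Rightarrow> real) \<Rightarrow> 'b) \<Rightarrow> bool" where
  "regularization Z M \<psi> K D\<psi> \<psi>k \<longleftrightarrow> tuning_set K \<and> M \<union> discrete_measures Z \<subseteq> D\<psi> \<and> D\<psi> \<subseteq> ca Z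
     \<and> (\<forall>Q\<in>M. ((\<lambda>k. norm (\<psi>k k Q - \<psi> Q)) \<longlongrightarrow> 0) (inf at_top (principal K)))"

definition approx_error :: "(real \<Rightarrow> 'm \<Rightarrow> 'b::real_normed_vector) \<Rightarrow> ('m \<Rightarrow> 'b) \<Rightarrow> real \<Rightarrow> 'm \<Rightarrow> real" where
  "approx_error \<psi>k \<psi> k P = norm (\<psi>k k P - \<psi> P)"

definition continuous_reg_at ::
  "real set \<Rightarrow> 'm set \<Rightarrow> (real \<Rightarrow> 'm \<Rightarrow> 'b::real_normed_vector) \<Rightarrow> ('m \<Rightarrow> 'm \<Rightarrow> real)
   \<Rightarrow> (real \<Rightarrow> real \<Rightarrow> real) \<Rightarrow> 'm \<Rightarrow> bool" where
  "continuous_reg_at K D\<psi> \<psi>k d \<delta> P \<longleftrightarrow> P \<in> D\<psi> \<and> (\<forall>k\<in>K. modulus_of_continuity (\<delta> k))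
     \<and> (\<forall>k\<in>K. \<forall>Q\<in>D\<psi>. norm (\<psi>k k Q - \<psi>k k P) \<le> \<delta> k (d Q P))"

end

theory Submission
  imports Defs
begin

text \<open>Choose tuning parameters \<open>k\<^sub>m \<rightarrow> \<infinity>\<close> in \<open>K\<close>. For each fixed \<open>m\<close>,
  \<open>\<delta>\<^sub>k\<^sub>m(d(P\<^sub>n,P)) = o\<^sub>P(1)\<close> because a modulus of continuity is continuous at 0.
  Convergence in outer probability is a countable family of null sequences, so a
  diagonal argument yields a slowly growing \<open>m = g(n)\<close> along which this remains
  \<open>o\<^sub>P(1)\<close>, while \<open>B\<^sub>k\<^sub>g\<^sub>(\<^sub>n\<^sub>)(P) \<rightarrow> 0\<close>. The triangle inequality
  \<open>\<parallel>\<psi>\<^sub>k(P\<^sub>n) - \<psi>(P)\<parallel> \<le> \<delta>\<^sub>k(d(P\<^sub>n,P)) + B\<^sub>k(P)\<close> concludes.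
  Independence and the law of the observations enter only through the hypothesis
  \<open>d(P\<^sub>n,P) = o\<^sub>P(1)\<close>.\<close>

lemma outer_prob_nonneg: "outer_prob \<Omega> A \<ge> 0"
  unfolding outer_prob_def
  by (rule cInf_greatest) (auto intro!: exI[of _ "space \<Omega>"])

lemma outer_prob_mono: "A \<subseteq> A' \<Longrightarrow> outer_prob \<Omega> A \<le> outer_prob \<Omega> A'"
  unfolding outer_prob_def
proof (rule cInf_superset_mono)
  show "{measure \<Omega> B |B. B \<in> sets \<Omega> \<and> A' \<inter> space \<Omega> \<subseteq> B} \<noteq> {}" by blast
  show "bdd_below {measure \<Omega> B |B. B \<in> sets \<Omega> \<and> A \<inter> space \<Omega> \<subseteq> B}"
    by (rule bdd_belowI[of _ 0]) auto
qed blast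

lemma tendsto_outer_prob_zero_mono:
  assumes "((\<lambda>n. outer_prob \<Omega> (B n)) \<longlongrightarrow> 0) sequentially"
    and "eventually (\<lambda>n. A n \<subseteq> B n) sequentially"
  shows "((\<lambda>n. outer_prob \<Omega> (A n)) \<longlongrightarrow> 0) sequentially"
proof (rule Lim_null_comparison[OF _ assms(1)])
  show "eventually (\<lambda>n. norm (outer_prob \<Omega> (A n)) \<le> outer_prob \<Omega> (B n)) sequentially"
    using assms(2) by eventually_elim (simp add: outer_prob_nonneg outer_prob_mono)
qed

lemma o_P1_le_plus_null:
  assumes Y: "o_P1 \<Omega> Y" and a: "a \<longlonglongrightarrow> 0"
    and le: "eventually (\<lambda>n. \<forall>\<omega>\<in>space \<Omega>. \<bar>Y' n \<omega>\<bar> \<le> Y n \<omega> + a n) sequentially"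
  shows "o_P1 \<Omega> Y'"
  unfolding o_P1_def
proof (intro allI impI)
  fix \<epsilon> :: real assume "\<epsilon> > 0"
  have a_small: "eventually (\<lambda>n. a n < \<epsilon>/2) sequentially"
    using order_tendstoD(2)[OF a, of "\<epsilon>/2"] \<open>\<epsilon> > 0\<close> by simp
  have "((\<lambda>n. outer_prob \<Omega> {\<omega> \<in> space \<Omega>. \<epsilon>/2 < \<bar>Y n \<omega>\<bar>}) \<longlongrightarrow> 0) sequentially"
    using Y[unfolded o_P1_def, rule_format, of "\<epsilon>/2"] \<open>\<epsilon> > 0\<close> by simp
  moreover have "eventually (\<lambda>n. {\<omega> \<in> space \<Omega>. \<epsilon> < \<bar>Y' n \<omega>\<bar>} \<subseteq> {\<omega> \<in> space \<Omega>. \<epsilon>/2 < \<bar>Y n \<omega>\<bar>}) sequentially"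
    using le a_small by eventually_elim fastforce
  ultimately show "((\<lambda>n. outer_prob \<Omega> {\<omega> \<in> space \<Omega>. \<epsilon> < \<bar>Y' n \<omega>\<bar>}) \<longlongrightarrow> 0) sequentially"
    by (rule tendsto_outer_prob_zero_mono)
qed

lemma o_P1_continuous_at_zero:
  assumes Y: "o_P1 \<Omega> Y" and f: "continuous (at 0 within S) f" "f 0 = 0"
    and S: "eventually (\<lambda>n. \<forall>\<omega>\<in>space \<Omega>. Y n \<omega> \<in> S) sequentially"
  shows "o_P1 \<Omega> (\<lambda>n \<omega>. f (Y n \<omega>))"
  unfolding o_P1_def
proof (intro allI impI)
  fix \<epsilon> :: real assume "\<epsilon> > 0"
  with f obtain \<eta> where "\<eta> > 0" and \<eta>: "\<And>t. t \<in> S \<Longrightarrow> \<bar>t\<bar> < \<eta> \<Longrightarrow> \<bar>f t\<bar> < \<epsilon>"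
    unfolding continuous_within_eps_delta by (auto simp: dist_real_def)
  have "((\<lambda>n. outer_prob \<Omega> {\<omega> \<in> space \<Omega>. \<eta>/2 < \<bar>Y n \<omega>\<bar>}) \<longlongrightarrow> 0) sequentially"
    using Y[unfolded o_P1_def, rule_format, of "\<eta>/2"] \<open>\<eta> > 0\<close> by simp
  moreover have "eventually (\<lambda>n. {\<omega> \<in> space \<Omega>. \<epsilon> < \<bar>f (Y n \<omega>)\<bar>} \<subseteq> {\<omega> \<in> space \<Omega>. \<eta>/2 < \<bar>Y n \<omega>\<bar>}) sequentially"
    using S by eventually_elim (use \<eta> \<open>\<eta> > 0\<close> in fastforce)
  ultimately show "((\<lambda>n. outer_prob \<Omega> {\<omega> \<in> space \<Omega>. \<epsilon> < \<bar>f (Y n \<omega>)\<bar>}) \<longlongrightarrow> 0) sequentially"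
    by (rule tendsto_outer_prob_zero_mono)
qed

lemma tendsto_zero_diagonal:
  fixes f :: "nat \<Rightarrow> nat \<Rightarrow> real"
  assumes lim: "\<And>m. f m \<longlonglongrightarrow> 0"
  shows "\<exists>g. filterlim g at_top sequentially \<and> (\<lambda>n. f (g n) n) \<longlonglongrightarrow> 0"
proof -
  have "\<exists>N. \<forall>n\<ge>N. \<bar>f m n\<bar> < inverse (real (Suc m))" for m
    using LIMSEQ_D[OF lim[of m], of "inverse (real (Suc m))"] by simp
  then obtain N where N: "\<And>m n. n \<ge> N m \<Longrightarrow> \<bar>f m n\<bar> < inverse (real (Suc m))" by metis
  text \<open>\<open>g n\<close> is the largest \<open>j\<close> whose threshold \<open>N j + j\<close> has been passed by \<open>n\<close>;
    the summand \<open>j\<close> makes this set finite.\<close>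
  define g where "g n = Max ({0} \<union> {j. N j + j \<le> n})" for n
  have fin: "finite ({0} \<union> {j. N j + j \<le> n})" for n
    by (rule finite_subset[of _ "{..n}"]) auto
  have g_ge: "N j + j \<le> n \<Longrightarrow> j \<le> g n" for n j
    unfolding g_def using fin by (intro Max_ge) auto
  have g_passed: "N (g n) \<le> n" if "N 0 \<le> n" for n
  proof -
    have "g n \<in> {0} \<union> {j. N j + j \<le> n}" unfolding g_def using fin by (intro Max_in) auto
    then show ?thesis using that by auto
  qed
  have g_lim: "filterlim g at_top sequentially"
    unfolding filterlim_at_top eventually_sequentially using g_ge by blast
  have "eventually (\<lambda>n. norm (f (g n) n) \<le> inverse (real (Suc (g n)))) sequentially"
    using eventually_ge_at_top[of "N 0"]
    by eventually_elim (use N g_passed in \<open>simp add: less_imp_le\<close>)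
  moreover have "(\<lambda>n. inverse (real (Suc (g n)))) \<longlonglongrightarrow> 0"
    using filterlim_compose[OF LIMSEQ_inverse_real_of_nat g_lim] .
  ultimately have "(\<lambda>n. f (g n) n) \<longlonglongrightarrow> 0" by (rule Lim_null_comparison)
  with g_lim show ?thesis by blast
qed

lemma o_P1_diagonal:
  fixes Y :: "nat \<Rightarrow> nat \<Rightarrow> 'w \<Rightarrow> real"
  assumes "\<And>m. o_P1 \<Omega> (Y m)"
  shows "\<exists>g. filterlim g at_top sequentially \<and> o_P1 \<Omega> (\<lambda>n \<omega>. Y (g n) n \<omega>)"
proof -
  define f where
    "f m n = outer_prob \<Omega> {\<omega> \<in> space \<Omega>. inverse (real (Suc m)) < \<bar>Y m n \<omega>\<bar>}" for m n
  have "f m \<longlonglongrightarrow> 0" for m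
    unfolding f_def
    using assms[of m, unfolded o_P1_def, rule_format, of "inverse (real (Suc m))"] by simp
  then obtain g where g: "filterlim g at_top sequentially" and fg: "(\<lambda>n. f (g n) n) \<longlonglongrightarrow> 0"
    using tendsto_zero_diagonal by blast
  have "o_P1 \<Omega> (\<lambda>n \<omega>. Y (g n) n \<omega>)"
    unfolding o_P1_def
  proof (intro allI impI)
    fix \<epsilon> :: real assume "\<epsilon> > 0"
    have "eventually (\<lambda>n. inverse (real (Suc (g n))) < \<epsilon>) sequentially"
      using order_tendstoD(2)[OF filterlim_compose[OF LIMSEQ_inverse_real_of_nat g] \<open>\<epsilon> > 0\<close>] .
    then have "eventually (\<lambda>n. {\<omega> \<in> space \<Omega>. \<epsilon> < \<bar>Y (g n) n \<omega>\<bar>}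
        \<subseteq> {\<omega> \<in> space \<Omega>. inverse (real (Suc (g n))) < \<bar>Y (g n) n \<omega>\<bar>}) sequentially"
      by eventually_elim auto
    from tendsto_outer_prob_zero_mono[OF fg[unfolded f_def] this]
    show "(\<lambda>n. outer_prob \<Omega> {\<omega> \<in> space \<Omega>. \<epsilon> < \<bar>Y (g n) n \<omega>\<bar>}) \<longlonglongrightarrow> 0" .
  qed
  with g show ?thesis by blast
qed

lemma tuning_set_sequence:
  assumes "tuning_set K"
  shows "\<exists>ks. (\<forall>m. ks m \<in> K) \<and> filterlim ks (inf at_top (principal K)) sequentially"
proof -
  have "\<forall>m::nat. \<exists>k\<in>K. real m < k"
    using assms unfolding tuning_set_def by blast
  then obtain ks where ksK: "\<And>m. ks m \<in> K" and ks_gt: "\<And>m. real m < ks m"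
    by metis
  have "filterlim ks at_top sequentially"
    by (rule filterlim_at_top_mono[OF filterlim_real_sequentially]) (simp add: less_imp_le ks_gt)
  moreover have "filterlim ks (principal K) sequentially"
    unfolding filterlim_principal using ksK by simp
  ultimately show ?thesis
    using ksK by (auto simp: filterlim_inf)
qed

lemma tuning_sequence_selection:
  assumes K: "tuning_set K"
    and B: "(B \<longlongrightarrow> 0) (inf at_top (principal K))"
    and modulus: "\<And>k. k \<in> K \<Longrightarrow> modulus_of_continuity (\<delta> k)"
    and D: "o_P1 \<Omega> D" "eventually (\<lambda>n. \<forall>\<omega>\<in>space \<Omega>. D n \<omega> \<ge> 0) sequentially"
  shows "\<exists>kn. (\<forall>n. kn n \<in> K) \<and> (\<lambda>n. B (kn n)) \<longlonglongrightarrow> 0 \<and> o_P1 \<Omega> (\<lambda>n \<omega>. \<delta> (kn n) (D n \<omega>))"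
proof -
  obtain ks where ksK: "\<And>m. ks m \<in> K" and ks_lim: "filterlim ks (inf at_top (principal K)) sequentially"
    using tuning_set_sequence[OF K] by blast
  have "o_P1 \<Omega> (\<lambda>n \<omega>. \<delta> (ks m) (D n \<omega>))" for m
  proof (rule o_P1_continuous_at_zero[OF D(1), where S = "{0..}"])
    show "continuous (at 0 within {0..}) (\<delta> (ks m))" "\<delta> (ks m) 0 = 0"
      using modulus[OF ksK] unfolding modulus_of_continuity_def
      by (auto simp: continuous_on_eq_continuous_within)
  qed (use D(2) in simp)
  then obtain g where g: "filterlim g at_top sequentially"
    and \<delta>_oP: "o_P1 \<Omega> (\<lambda>n \<omega>. \<delta> (ks (g n)) (D n \<omega>))"
    using o_P1_diagonal[of \<Omega> "\<lambda>m n \<omega>. \<delta> (ks m) (D n \<omega>)"] by blast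
  have "(\<lambda>n. B (ks (g n))) \<longlonglongrightarrow> 0"
    using filterlim_compose[OF B filterlim_compose[OF ks_lim g]] .
  with ksK \<delta>_oP show ?thesis
    by (intro exI[of _ "\<lambda>n. ks (g n)"]) simp
qed

lemma continuous_reg_at_error_bound:
  assumes "continuous_reg_at K D\<psi> \<psi>k d \<delta> P" "k \<in> K" "Q \<in> D\<psi>"
  shows "norm (\<psi>k k Q - \<psi> P) \<le> \<delta> k (d Q P) + approx_error \<psi>k \<psi> k P"
  using assms unfolding continuous_reg_at_def approx_error_def
  by (blast intro: norm_diff_triangle_le)

lemma sigma_algebra_borel_sets_on: "sigma_algebra Z (borel_sets_on Z)"
  using sets.sigma_algebra_axioms[of "restrict_space borel Z"]
  by (simp add: borel_sets_on_def space_restrict_space)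

lemma empirical_in_ca:
  fixes Z :: "'a::euclidean_space set"
  shows "empirical Z X n \<omega> \<in> ca Z"
  unfolding ca_def
proof (intro CollectI conjI allI impI)
  fix F :: "nat \<Rightarrow> 'a set" assume F: "range F \<subseteq> borel_sets_on Z" and "disjoint_family F"
  then have "(\<lambda>i. (\<Sum>j<n. indicator (F i) (X j \<omega>) :: real) / real n)
      sums ((\<Sum>j<n. indicator (\<Union>i. F i) (X j \<omega>)) / real n)"
    by (intro sums_divide sums_sum indicator_sums) (auto simp: disjoint_family_on_def)
  moreover have "(\<Union>i. F i) \<in> borel_sets_on Z"
    using sigma_algebra.countable_UN[OF sigma_algebra_borel_sets_on F] by simp
  ultimately show "(\<lambda>i. empirical Z X n \<omega> (F i)) sums empirical Z X n \<omega> (\<Union>i. F i)"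
    using F by (simp add: empirical_def image_subset_iff)
next
  show "\<exists>C. \<forall>(I::nat set) F. finite I \<longrightarrow> F ` I \<subseteq> borel_sets_on Z \<longrightarrow> disjoint_family_on F I
      \<longrightarrow> (\<Sum>i\<in>I. \<bar>empirical Z X n \<omega> (F i)\<bar>) \<le> C"
  proof (intro exI allI impI)
    fix I :: "nat set" and F
    assume I: "finite I" and F: "F ` I \<subseteq> borel_sets_on Z" and disj: "disjoint_family_on F I"
    have "(\<Sum>i\<in>I. \<bar>empirical Z X n \<omega> (F i)\<bar>) = (\<Sum>i\<in>I. (\<Sum>j<n. indicator (F i) (X j \<omega>)) / real n)"
      using F by (intro sum.cong refl) (simp add: empirical_def sum_nonneg image_subset_iff)
    also have "\<dots> = (\<Sum>j<n. (\<Sum>i\<in>I. indicator (F i) (X j \<omega>))) / real n"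
      unfolding sum_divide_distrib[symmetric] by (subst sum.swap) (rule refl)
    also have "\<dots> = (\<Sum>j<n. indicator (\<Union>(F ` I)) (X j \<omega>)) / real n"
      by (simp add: indicator_UN_disjoint[OF I disj])
    also have "\<dots> \<le> (\<Sum>j<n. 1) / real n"
      by (intro divide_right_mono sum_mono) (auto simp: indicator_def)
    also have "\<dots> \<le> 1" by simp
    finally show "(\<Sum>i\<in>I. \<bar>empirical Z X n \<omega> (F i)\<bar>) \<le> 1" .
  qed
qed (simp_all add: empirical_def)

lemma empirical_in_discrete_measures:
  fixes Z :: "'a::euclidean_space set"
  assumes inZ: "\<And>i. X i \<omega> \<in> Z" and "n \<ge> 1"
  shows "empirical Z X n \<omega> \<in> discrete_measures Z"
proof -
  have "Z \<in> borel_sets_on Z"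
    using sets.top[of "restrict_space borel Z"] by (simp add: borel_sets_on_def space_restrict_space)
  then have "empirical Z X n \<omega> Z = 1"
    using assms by (simp add: empirical_def)
  then have "empirical Z X n \<omega> \<in> prob_measures Z"
    by (simp add: prob_measures_def empirical_in_ca empirical_def sum_nonneg)
  moreover have "empirical Z X n \<omega> (Z - (\<lambda>i. X i \<omega>) ` {..<n}) = 0"
    by (simp add: empirical_def)
  ultimately show ?thesis
    unfolding discrete_measures_def using inZ
    by (intro CollectI conjI exI[of _ "(\<lambda>i. X i \<omega>) ` {..<n}"]) auto
qed

theorem theorem1:
  fixes Z :: "'a::euclidean_space set"
    and M :: "('a set \<Rightarrow> real) set"
    and \<psi> :: "('a set \<Rightarrow> real) \<Rightarrow> 'b::real_normed_vector"
    and K :: "real set" and D\<psi> :: "('a set \<Rightarrow> real) set"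
    and \<psi>k :: "real \<Rightarrow> ('a set \<Rightarrow> real) \<Rightarrow> 'b"
    and d :: "('a set \<Rightarrow> real) \<Rightarrow> ('a set \<Rightarrow> real) \<Rightarrow> real"
    and \<delta> :: "real \<Rightarrow> real \<Rightarrow> real"
    and P :: "'a set \<Rightarrow> real"
    and \<Omega> :: "'w measure" and X :: "nat \<Rightarrow> 'w \<Rightarrow> 'a"
  assumes model: "M \<subseteq> prob_measures Z"
    and P_in: "P \<in> M"
    and prob: "prob_space \<Omega>"
    and rv: "\<And>i. X i \<in> borel_measurable \<Omega>"
    and inZ: "\<And>i \<omega>. \<omega> \<in> space \<Omega> \<Longrightarrow> X i \<omega> \<in> Z"
    and indep: "prob_space.indep_vars \<Omega> (\<lambda>_. borel) X UNIV"
    and law: "\<And>i A. A \<in> borel_sets_on Z \<Longrightarrow> measure \<Omega> {\<omega> \<in> space \<Omega>. X i \<omega> \<in> A} = P A"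
    and reg: "regularization Z M \<psi> K D\<psi> \<psi>k"
    and d_nonneg: "\<And>Q Q'. Q \<in> D\<psi> \<Longrightarrow> Q' \<in> D\<psi> \<Longrightarrow> d Q Q' \<ge> 0"
    and cont: "continuous_reg_at K D\<psi> \<psi>k d \<delta> P"
    and consistent: "o_P1 \<Omega> (\<lambda>n \<omega>. d (empirical Z X n \<omega>) P)"
  shows "\<exists>kn :: nat \<Rightarrow> real. (\<forall>n. kn n \<in> K)
           \<and> ((\<lambda>n. approx_error \<psi>k \<psi> (kn n) P) \<longlonglongrightarrow> 0)
           \<and> o_P1 \<Omega> (\<lambda>n \<omega>. \<delta> (kn n) (d (empirical Z X n \<omega>) P))
           \<and> o_P1 \<Omega> (\<lambda>n \<omega>. norm (\<psi>k (kn n) (empirical Z X n \<omega>) - \<psi> P))"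
proof -
  from reg P_in have "tuning_set K" and "discrete_measures Z \<subseteq> D\<psi>"
    and B_lim: "((\<lambda>k. approx_error \<psi>k \<psi> k P) \<longlongrightarrow> 0) (inf at_top (principal K))"
    unfolding regularization_def approx_error_def by auto
  from cont have "P \<in> D\<psi>" and modulus: "\<And>k. k \<in> K \<Longrightarrow> modulus_of_continuity (\<delta> k)"
    unfolding continuous_reg_at_def by auto
  \<comment> \<open>\<open>n \<ge> 1\<close>: the empirical measure of no observations is the zero set function.\<close>
  have "empirical Z X n \<omega> \<in> D\<psi>" if "\<omega> \<in> space \<Omega>" "n \<ge> 1" for n \<omega>
    using empirical_in_discrete_measures[of X \<omega> Z n] inZ[OF that(1)] that(2)
      \<open>discrete_measures Z \<subseteq> D\<psi>\<close> by blast
  then have Pn_in: "eventually (\<lambda>n. \<forall>\<omega>\<in>space \<Omega>. empirical Z X n \<omega> \<in> D\<psi>) sequentially"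
    by (intro eventually_sequentiallyI[of 1]) blast
  have "eventually (\<lambda>n. \<forall>\<omega>\<in>space \<Omega>. d (empirical Z X n \<omega>) P \<ge> 0) sequentially"
    using Pn_in by eventually_elim (simp add: d_nonneg \<open>P \<in> D\<psi>\<close>)
  from tuning_sequence_selection[where \<delta> = \<delta>, OF \<open>tuning_set K\<close> B_lim modulus consistent this]
  obtain kn where knK: "\<And>n. kn n \<in> K" and B_kn: "(\<lambda>n. approx_error \<psi>k \<psi> (kn n) P) \<longlonglongrightarrow> 0"
    and \<delta>_oP: "o_P1 \<Omega> (\<lambda>n \<omega>. \<delta> (kn n) (d (empirical Z X n \<omega>) P))"
    by blast
  have norm_oP: "o_P1 \<Omega> (\<lambda>n \<omega>. norm (\<psi>k (kn n) (empirical Z X n \<omega>) - \<psi> P))"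
  proof (rule o_P1_le_plus_null[OF \<delta>_oP B_kn])
    show "eventually (\<lambda>n. \<forall>\<omega>\<in>space \<Omega>. \<bar>norm (\<psi>k (kn n) (empirical Z X n \<omega>) - \<psi> P)\<bar>
        \<le> \<delta> (kn n) (d (empirical Z X n \<omega>) P) + approx_error \<psi>k \<psi> (kn n) P) sequentially"
      using Pn_in by eventually_elim (simp add: continuous_reg_at_error_bound[OF cont] knK)
  qed
  show ?thesis
    using knK B_kn \<delta>_oP norm_oP by blast
qed

end
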